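(* Let $m\ge 1$. In the checker game on $2m+1$ positions, each of the configurations $O(wb)^m$ and $(wb)^mO$ can be transformed into the configuration $w^mOb^m$ by a sequence of exactly $\frac{m(m+1)}{2}$ legal moves.
   Context: Positions $1,\dots,2m+1$ in a row; a configuration is a word over $\{b,w,O\}$ with exactly one $O$, where $b$ denotes a black checker, $w$ a white checker and $O$ the vacancy; $(wb)^m$ denotes $wb$ repeated $m$ times. A legal move is either a slide (a checker adjacent to the vacancy moves into it) or a jump (a checker at distance two from the vacancy jumps over the checker between them into the vacancy). *)

theory Defs
  imports Main
begin

datatype cell = Bc | Wc | Oc

text \<open>A configuration is a list over {b,w,O} with exactly one vacancy O.
Positions are 0-indexed here (position k+1 in the paper is index k).\<close>

definition is_config :: "cell list \<Rightarrow> bool" where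
  "is_config c \<longleftrightarrow> length (filter (\<lambda>x. x = Oc) c) = 1"

definition legal_move :: "cell list \<Rightarrow> cell list \<Rightarrow> bool" where
  "legal_move c d \<longleftrightarrow> is_config c \<and>
     (\<exists>i j. i < length c \<and> j < length c \<and> c ! i = Oc \<and> c ! j \<noteq> Oc \<and>
        (((i = j + 1 \<or> j = i + 1)) \<or>
         ((i = j + 2 \<or> j = i + 2) \<and> c ! ((i + j) div 2) \<noteq> Oc)) \<and>
        d = c[i := c ! j, j := Oc])"

definition wb_pow :: "nat \<Rightarrow> cell list" where
  "wb_pow m = concat (replicate m [Wc, Bc])"

end

theory Submission
  imports Defs
begin

text \<open>Write \<open>T k = k(k+1)/2\<close>. Solving \<open>w\<^sup>a (wb)\<^sup>k O b\<^sup>c\<close> and its mirror image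
\<open>w\<^sup>a O (wb)\<^sup>k b\<^sup>c\<close> takes \<open>T k\<close> moves each, by a joint induction on \<open>k\<close>, because
\<open>k + 1\<close> moves turn either configuration with \<open>k + 1\<close> pairs into the other one with
\<open>k\<close> pairs and one more sorted checker on each side. For the vacancy on the right:
slide the last \<open>b\<close> right, so that the vacancy sits after \<open>(bw)\<^sup>k\<close>, then jump each
\<open>b\<close> over its \<open>w\<close> to the right, carrying the vacancy leftwards through the word and
turning \<open>(bw)\<^sup>k O\<close> into \<open>O (wb)\<^sup>k\<close>; the mirror case is symmetric.
Hence \<open>T (k + 1) = (k + 1) + T k\<close>.\<close>

definition bw_pow :: "nat \<Rightarrow> cell list" where
  "bw_pow k = concat (replicate k [Bc, Wc])"

lemma Oc_notin_wb_pow [simp]: "Oc \<notin> set (wb_pow k)"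
  by (induct k) (auto simp: wb_pow_def)

lemma Oc_notin_bw_pow [simp]: "Oc \<notin> set (bw_pow k)"
  by (induct k) (auto simp: bw_pow_def)

lemma wb_pow_Suc: "wb_pow (Suc k) = Wc # Bc # wb_pow k"
  by (simp add: wb_pow_def)

lemma wb_pow_Suc': "wb_pow (Suc k) = wb_pow k @ [Wc, Bc]"
  by (induct k) (auto simp: wb_pow_def)

lemma bw_pow_Suc: "bw_pow (Suc k) = Bc # Wc # bw_pow k"
  by (simp add: bw_pow_def)

lemma bw_pow_Suc': "bw_pow (Suc k) = bw_pow k @ [Bc, Wc]"
  by (induct k) (auto simp: bw_pow_def)

lemma wb_pow_append_Wc: "wb_pow k @ Wc # xs = Wc # bw_pow k @ xs"
  by (induct k) (simp_all add: wb_pow_def bw_pow_def)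

lemma Bc_Cons_wb_pow_append: "Bc # wb_pow k @ xs = bw_pow k @ Bc # xs"
  by (induct k) (simp_all add: wb_pow_def bw_pow_def)

lemma is_config_frame:
  assumes "Oc \<notin> set X" "Oc \<notin> set Y"
  shows "is_config (X @ u @ Y) \<longleftrightarrow> is_config u"
proof -
  have "filter (\<lambda>x. x = Oc) X = []" "filter (\<lambda>x. x = Oc) Y = []"
    using assms by (auto simp: filter_empty_conv)
  then show ?thesis by (simp add: is_config_def)
qed

lemma legal_move_frame:
  assumes "legal_move u v" "Oc \<notin> set X" "Oc \<notin> set Y"
  shows "legal_move (X @ u @ Y) (X @ v @ Y)"
proof -
  from assms(1) obtain i j where
    ij: "i < length u" "j < length u" "u ! i = Oc" "u ! j \<noteq> Oc"
    and step: "(i = j + 1 \<or> j = i + 1) \<or> (i = j + 2 \<or> j = i + 2) \<and> u ! ((i + j) div 2) \<noteq> Oc"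
    and v: "v = u[i := u ! j, j := Oc]" and cfg: "is_config u"
    unfolding legal_move_def by blast
  let ?c = "X @ u @ Y" and ?i = "length X + i" and ?j = "length X + j"
  have "?c ! ((?i + ?j) div 2) = u ! ((i + j) div 2)"
    using ij(1,2) step by (auto simp: nth_append)
  then have "(?i = ?j + 1 \<or> ?j = ?i + 1) \<or>
      (?i = ?j + 2 \<or> ?j = ?i + 2) \<and> ?c ! ((?i + ?j) div 2) \<noteq> Oc"
    using step by auto
  moreover have "X @ v @ Y = ?c[?i := ?c ! ?j, ?j := Oc]"
    using ij(1,2) by (simp add: v nth_append list_update_append)
  moreover have "?i < length ?c" "?j < length ?c" "?c ! ?i = Oc" "?c ! ?j \<noteq> Oc"
    using ij by (auto simp: nth_append)
  moreover have "is_config ?c"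
    using cfg assms(2,3) by (simp add: is_config_frame)
  ultimately show ?thesis
    unfolding legal_move_def by blast
qed

lemma legal_move_slide_Bc: "legal_move [Bc, Oc] [Oc, Bc]"
  unfolding legal_move_def is_config_def
  by (rule conjI, simp, rule exI[of _ 1], rule exI[of _ 0], simp)

lemma legal_move_slide_Wc: "legal_move [Oc, Wc] [Wc, Oc]"
  unfolding legal_move_def is_config_def
  by (rule conjI, simp, rule exI[of _ 0], rule exI[of _ 1], simp)

lemma legal_move_jump_Wc: "legal_move [Oc, Bc, Wc] [Wc, Bc, Oc]"
  unfolding legal_move_def is_config_def
  by (rule conjI, simp, rule exI[of _ 0], rule exI[of _ 2], simp)

lemma legal_move_jump_Bc: "legal_move [Bc, Wc, Oc] [Oc, Wc, Bc]"
  unfolding legal_move_def is_config_def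
  by (rule conjI, simp, rule exI[of _ 2], rule exI[of _ 0], simp)

lemma sweep_right:
  assumes "Oc \<notin> set X" "Oc \<notin> set Y"
  shows "(legal_move ^^ k) (X @ Oc # bw_pow k @ Y) (X @ wb_pow k @ Oc # Y)"
  using assms(1)
proof (induct k arbitrary: X)
  case 0
  then show ?case by (simp add: wb_pow_def bw_pow_def)
next
  case (Suc k)
  have "legal_move (X @ Oc # bw_pow (Suc k) @ Y) ((X @ [Wc, Bc]) @ Oc # bw_pow k @ Y)"
    using legal_move_frame[OF legal_move_jump_Wc, of X "bw_pow k @ Y"] Suc.prems assms(2)
    by (simp add: bw_pow_Suc)
  also have "(legal_move ^^ k) \<dots> ((X @ [Wc, Bc]) @ wb_pow k @ Oc # Y)"
    by (rule Suc.hyps) (use Suc.prems in simp)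
  finally show ?case by (simp add: wb_pow_Suc)
qed

lemma sweep_left:
  assumes "Oc \<notin> set X" "Oc \<notin> set Y"
  shows "(legal_move ^^ k) (X @ bw_pow k @ Oc # Y) (X @ Oc # wb_pow k @ Y)"
  using assms(2)
proof (induct k arbitrary: Y)
  case 0
  then show ?case by (simp add: wb_pow_def bw_pow_def)
next
  case (Suc k)
  have "legal_move (X @ bw_pow (Suc k) @ Oc # Y) (X @ bw_pow k @ Oc # Wc # Bc # Y)"
    using legal_move_frame[OF legal_move_jump_Bc, of "X @ bw_pow k" Y] Suc.prems assms(1)
    by (simp add: bw_pow_Suc')
  also have "(legal_move ^^ k) \<dots> (X @ Oc # wb_pow k @ Wc # Bc # Y)"
    by (rule Suc.hyps) (use Suc.prems in simp)
  finally show ?case by (simp add: wb_pow_Suc')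
qed

lemma vacancy_right_step:
  assumes "Oc \<notin> set X" "Oc \<notin> set Y"
  shows "(legal_move ^^ Suc k) (X @ wb_pow (Suc k) @ Oc # Y) (X @ Wc # Oc # wb_pow k @ Bc # Y)"
proof -
  have "legal_move (X @ wb_pow (Suc k) @ Oc # Y) ((X @ Wc # bw_pow k) @ Oc # Bc # Y)"
    using legal_move_frame[OF legal_move_slide_Bc, of "X @ wb_pow k @ [Wc]" Y] assms
    by (simp add: wb_pow_Suc' wb_pow_append_Wc)
  also have "(legal_move ^^ k) \<dots> ((X @ [Wc]) @ Oc # wb_pow k @ Bc # Y)"
    using sweep_left[of "X @ [Wc]" "Bc # Y" k] assms by simp
  finally show ?thesis by simp
qed

lemma vacancy_left_step:
  assumes "Oc \<notin> set X" "Oc \<notin> set Y"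
  shows "(legal_move ^^ Suc k) (X @ Oc # wb_pow (Suc k) @ Y) (X @ Wc # wb_pow k @ Oc # Bc # Y)"
proof -
  have "legal_move (X @ Oc # wb_pow (Suc k) @ Y) ((X @ [Wc]) @ Oc # bw_pow k @ Bc # Y)"
    using legal_move_frame[OF legal_move_slide_Wc, of X "Bc # wb_pow k @ Y"] assms
    by (simp add: wb_pow_Suc Bc_Cons_wb_pow_append)
  also have "(legal_move ^^ k) \<dots> ((X @ [Wc]) @ wb_pow k @ Oc # Bc # Y)"
    using sweep_right[of "X @ [Wc]" "Bc # Y" k] assms by simp
  finally show ?thesis by simp
qed

lemma wb_pow_sorting:
  "(legal_move ^^ (k * (k + 1) div 2))
      (replicate a Wc @ wb_pow k @ Oc # replicate c Bc)
      (replicate (a + k) Wc @ Oc # replicate (c + k) Bc)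
   \<and> (legal_move ^^ (k * (k + 1) div 2))
      (replicate a Wc @ Oc # wb_pow k @ replicate c Bc)
      (replicate (a + k) Wc @ Oc # replicate (c + k) Bc)"
proof (induct k arbitrary: a c)
  case 0
  then show ?case by (simp add: wb_pow_def)
next
  case (Suc k)
  have moves: "Suc k * (Suc k + 1) div 2 = Suc k + k * (k + 1) div 2"
    by simp
  have target: "replicate (Suc a + k) Wc @ Oc # replicate (Suc c + k) Bc
      = replicate (a + Suc k) Wc @ Oc # replicate (c + Suc k) Bc"
    by simp
  have right: "(legal_move ^^ Suc k)
      (replicate a Wc @ wb_pow (Suc k) @ Oc # replicate c Bc)
      (replicate (Suc a) Wc @ Oc # wb_pow k @ replicate (Suc c) Bc)"
    using vacancy_right_step[of "replicate a Wc" "replicate c Bc" k]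
    by (simp add: replicate_app_Cons_same)
  have left: "(legal_move ^^ Suc k)
      (replicate a Wc @ Oc # wb_pow (Suc k) @ replicate c Bc)
      (replicate (Suc a) Wc @ wb_pow k @ Oc # replicate (Suc c) Bc)"
    using vacancy_left_step[of "replicate a Wc" "replicate c Bc" k]
    by (simp add: replicate_app_Cons_same)
  from Suc[of "Suc a" "Suc c"] show ?case
    unfolding moves target
    using relpowp_trans[OF right] relpowp_trans[OF left] by blast
qed

theorem lemma3:
  fixes m :: nat
  assumes "m \<ge> 1"
  shows "(legal_move ^^ (m * (m + 1) div 2)) (Oc # wb_pow m)
            (replicate m Wc @ [Oc] @ replicate m Bc)
       \<and> (legal_move ^^ (m * (m + 1) div 2)) (wb_pow m @ [Oc])
            (replicate m Wc @ [Oc] @ replicate m Bc)"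
  using wb_pow_sorting[of m 0 0] by simp

end
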